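(* Let $\mathbf{H}$ be a hyperplane in $\mathbb{R}^n$ whose $\beta$-neighborhood contains a subset $S$ of vertices of $\{-1,1\}^n$ with $|S|=\alpha\cdot 2^n$. Then there exists a hyperplane which passes through all the points of $\{-1,1\}^n\cup\{0,1\}^n$ that are contained in the $\beta$-neighborhood of $\mathbf{H}$, provided that $$0\le\beta\le\Big((2/\alpha)\cdot n^{5+\lfloor\log(n/\alpha)\rfloor}\cdot(2+\lfloor\log(n/\alpha)\rfloor)!\Big)^{-1}.$$
   Context: The $\beta$-neighborhood of a hyperplane $\mathbf{H}$ in $\mathbb{R}^n$ is the set of points at Euclidean distance at most $\beta$ from $\mathbf{H}$. Logarithms are base 2. *)

theory Defs
  imports "HOL-Analysis.Analysis"
begin

definition is_hyperplane :: "(real ^ 'n) set \<Rightarrow> bool" where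
  "is_hyperplane H \<longleftrightarrow> (\<exists>a b. a \<noteq> 0 \<and> H = {x. a \<bullet> x = b})"

definition neighborhood :: "(real ^ 'n) set \<Rightarrow> real \<Rightarrow> (real ^ 'n) set" where
  "neighborhood H \<beta> = {x. infdist x H \<le> \<beta>}"

definition cube_pm :: "(real ^ 'n) set" where
  "cube_pm = {x. \<forall>i. x $ i = -1 \<or> x $ i = 1}"

definition cube01 :: "(real ^ 'n) set" where
  "cube01 = {x. \<forall>i. x $ i = 0 \<or> x $ i = 1}"

end

theory Submission
  imports Defs
begin

text \<open>
  Write \<open>H = {x. a \<bullet> x = b}\<close>; points of the \<open>\<beta>\<close>-neighbourhood satisfy
  \<open>\<bar>a \<bullet> x - b\<bar> \<le> \<eta>\<close> with \<open>\<eta> = \<beta> * norm a\<close>. Take a maximal set \<open>J\<close> of coordinates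
  such that no nonzero signed sum of the \<open>a $ j\<close>, \<open>j \<in> J\<close>, lies in \<open>[-\<eta>, \<eta>]\<close>. Two points
  of \<open>S\<close> agreeing off \<open>J\<close> would produce such a sum, so \<open>card S \<le> 2 ^ (n - card J)\<close>,
  which bounds \<open>card J\<close> by \<open>log (n / \<alpha>)\<close>.

  By maximality every \<open>a $ i\<close> is within \<open>\<eta>\<close> of a signed sum of the \<open>a $ j\<close>, \<open>j \<in> J\<close>.
  Hence on grid points \<open>a \<bullet> x\<close> is within \<open>(n + 1) \<eta>\<close> of \<open>w \<bullet> P x\<close>, where \<open>w\<close> is
  \<open>a\<close> restricted to \<open>J\<close> and \<open>P\<close> is linear with integer values bounded by \<open>n\<close> on the grid.
  If the differences \<open>P x - P x\<^sub>0\<close> over the grid points near \<open>H\<close>, together with the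
  coordinate vectors off \<open>J\<close>, do not span, a nonzero vector orthogonal to them is supported
  on \<open>J\<close> and yields the required hyperplane. Otherwise Cramer's rule, applied to an integer
  matrix whose rows are chosen among these vectors, bounds every \<open>w $ j\<close> and hence every
  \<open>a $ i\<close> so tightly that \<open>norm a \<le> n * max \<bar>a $ i\<bar> < norm a\<close>.
\<close>

definition ternary_cube :: "(real ^ 'n) set" where
  "ternary_cube = {x. \<forall>i. x $ i \<in> {-1, 0, 1}}"

definition dissociated :: "real ^ 'n \<Rightarrow> real \<Rightarrow> 'n set \<Rightarrow> bool" where
  "dissociated a \<eta> J \<longleftrightarrow>
     (\<forall>e \<in> ternary_cube. e \<noteq> 0 \<longrightarrow> (\<forall>i. i \<notin> J \<longrightarrow> e $ i = 0) \<longrightarrow> \<eta> < \<bar>a \<bullet> e\<bar>)"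

lemma ternary_mult: "(x :: real) \<in> {-1, 0, 1} \<Longrightarrow> y \<in> {-1, 0, 1} \<Longrightarrow> x * y \<in> {-1, 0, 1}"
  by auto

lemma ternary_uminus: "(x :: real) \<in> {-1, 0, 1} \<Longrightarrow> - x \<in> {-1, 0, 1}"
  by auto

lemma ternary_nonzero:
  "(x :: real) \<in> {-1, 0, 1} \<Longrightarrow> x \<noteq> 0 \<Longrightarrow> x * x = 1 \<and> \<bar>x\<bar> = 1"
  by auto

lemma abs_nth_le_1_if_ternary: "x \<in> ternary_cube \<Longrightarrow> \<bar>x $ i\<bar> \<le> 1"
proof -
  assume "x \<in> ternary_cube"
  then have "x $ i \<in> {-1, 0, 1}" by (simp add: ternary_cube_def)
  then show ?thesis by auto
qed

lemma cube_pm_Un_cube01_subset_ternary_cube: "cube_pm \<union> cube01 \<subseteq> ternary_cube"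
  by (auto simp: cube_pm_def cube01_def ternary_cube_def)

lemma abs_inner_sub_le_if_in_neighborhood:
  fixes a x :: "real ^ 'n"
  assumes "a \<noteq> 0" and "x \<in> neighborhood {y. a \<bullet> y = b} \<beta>"
  shows "\<bar>a \<bullet> x - b\<bar> \<le> \<beta> * norm a"
proof -
  let ?H = "{y. a \<bullet> y = b}"
  have "(b / (a \<bullet> a)) *\<^sub>R a \<in> ?H" using assms(1) by simp
  then obtain h where h: "h \<in> ?H" "infdist x ?H = dist x h"
    using infdist_attains_inf[OF closed_hyperplane] by blast
  have "\<bar>a \<bullet> x - b\<bar> = \<bar>a \<bullet> (x - h)\<bar>" using h(1) by (simp add: inner_diff_right)
  also have "\<dots> \<le> norm a * dist x h" by (simp add: Cauchy_Schwarz_ineq2 dist_norm)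
  also have "\<dots> \<le> norm a * \<beta>"
    using assms(2) h(2) by (intro mult_left_mono) (auto simp: neighborhood_def)
  finally show ?thesis by (simp add: mult.commute)
qed

lemma exists_maximal_dissociated:
  fixes a :: "real ^ 'n"
  obtains J where "dissociated a \<eta> J" and "\<And>i. i \<notin> J \<Longrightarrow> \<not> dissociated a \<eta> (insert i J)"
proof -
  have "finite {J :: 'n set. dissociated a \<eta> J}" by simp
  moreover have "dissociated a \<eta> {}" by (auto simp: dissociated_def vec_eq_iff)
  ultimately obtain J where "dissociated a \<eta> J"
    and "\<And>K. dissociated a \<eta> K \<Longrightarrow> J \<subseteq> K \<Longrightarrow> J = K"
    using finite_has_maximal[of "{J. dissociated a \<eta> J}"] by blast
  then show thesis by (metis insert_absorb insert_subset subset_insertI that)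
qed

lemma eq_if_dissociated_agree_off:
  fixes a x y :: "real ^ 'n"
  assumes "x \<in> cube_pm" and "y \<in> cube_pm" and "\<bar>a \<bullet> x - b\<bar> \<le> \<eta>" and "\<bar>a \<bullet> y - b\<bar> \<le> \<eta>"
    and "dissociated a \<eta> J" and "\<And>i. i \<notin> J \<Longrightarrow> x $ i = y $ i"
  shows "x = y"
proof (rule ccontr)
  assume "x \<noteq> y"
  \<comment> \<open>\<open>x - y\<close> is twice a signed sum supported on \<open>J\<close>, and its \<open>a\<close>-value is at most \<open>2 \<eta>\<close>.\<close>
  define e where "e = (1/2) *\<^sub>R (x - y)"
  have pm: "x $ i \<in> {-1, 1}" "y $ i \<in> {-1, 1}" for i
    using assms(1,2) by (auto simp: cube_pm_def)
  have "e $ i \<in> {-1, 0, 1}" for i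
    using pm(1)[of i] pm(2)[of i] by (auto simp: e_def)
  then have "e \<in> ternary_cube" by (simp add: ternary_cube_def)
  moreover have "e \<noteq> 0" using \<open>x \<noteq> y\<close> by (simp add: e_def)
  moreover have "e $ i = 0" if "i \<notin> J" for i
    using assms(6)[OF that] by (simp add: e_def)
  ultimately have "\<eta> < \<bar>a \<bullet> e\<bar>" using assms(5) by (auto simp: dissociated_def)
  moreover have "\<bar>a \<bullet> e\<bar> = \<bar>(a \<bullet> x - b) - (a \<bullet> y - b)\<bar> / 2"
    by (simp add: e_def inner_diff_right)
  also have "\<dots> \<le> (\<bar>a \<bullet> x - b\<bar> + \<bar>a \<bullet> y - b\<bar>) / 2"
    by (intro divide_right_mono abs_triangle_ineq4) simp
  also have "\<dots> \<le> \<eta>" using assms(3,4) by simp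
  ultimately show False by simp
qed

lemma card_le_if_dissociated:
  fixes a :: "real ^ 'n"
  assumes "S \<subseteq> cube_pm" and "\<And>x. x \<in> S \<Longrightarrow> \<bar>a \<bullet> x - b\<bar> \<le> \<eta>" and "dissociated a \<eta> J"
  shows "card S * 2 ^ card J \<le> 2 ^ CARD('n)"
proof -
  define r where "r x = restrict (\<lambda>i. x $ i) (- J)" for x :: "real ^ 'n"
  have inj: "inj_on r S"
  proof (rule inj_onI)
    fix x y assume "x \<in> S" "y \<in> S" "r x = r y"
    then show "x = y"
      using assms eq_if_dissociated_agree_off[of x y a b \<eta> J]
      by (metis ComplI r_def restrict_apply' subsetD)
  qed
  have sub: "r ` S \<subseteq> PiE (- J) (\<lambda>_. {-1, 1})"
  proof (rule image_subsetI)
    fix x assume "x \<in> S"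
    then have "\<forall>i. x $ i \<in> {-1, 1}" using assms(1) by (auto simp: cube_pm_def)
    then show "r x \<in> PiE (- J) (\<lambda>_. {-1, 1})" by (simp add: r_def)
  qed
  have "card S = card (r ` S)" using card_image[OF inj] by simp
  also have "\<dots> \<le> card (PiE (- J) (\<lambda>_. {-1, 1 :: real}))"
    by (rule card_mono[OF _ sub]) (simp add: finite_PiE)
  also have "\<dots> = 2 ^ (CARD('n) - card J)"
    by (simp add: card_PiE Compl_eq_Diff_UNIV card_Diff_subset numeral_2_eq_2)
  finally have "card S * 2 ^ card J \<le> 2 ^ (CARD('n) - card J) * 2 ^ card J" by simp
  also have "\<dots> = 2 ^ CARD('n)" by (simp add: card_mono flip: power_add)
  finally show ?thesis .
qed

lemma approximating_row_if_not_dissociated: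
  fixes a :: "real ^ 'n"
  assumes "dissociated a \<eta> J" and "\<not> dissociated a \<eta> (insert i J)" and "i \<notin> J"
  obtains r where "r \<in> ternary_cube" and "\<And>j. j \<notin> J \<Longrightarrow> r $ j = 0"
    and "\<bar>a $ i - r \<bullet> a\<bar> \<le> \<eta>"
proof -
  obtain e where e: "e \<in> ternary_cube" "e \<noteq> 0" "\<And>j. j \<notin> insert i J \<Longrightarrow> e $ j = 0"
    "\<bar>a \<bullet> e\<bar> \<le> \<eta>"
    using assms(2) by (auto simp: dissociated_def not_less)
  have "e $ i \<noteq> 0"
  proof
    assume "e $ i = 0"
    then have "\<forall>j. j \<notin> J \<longrightarrow> e $ j = 0" using e(3) by (metis insertE)
    then have "\<eta> < \<bar>a \<bullet> e\<bar>" using e(1,2) assms(1) by (simp add: dissociated_def)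
    then show False using e(4) by simp
  qed
  have e_mem: "e $ j \<in> {-1, 0, 1}" for j
    using e(1) by (simp add: ternary_cube_def)
  have sq: "e $ i * e $ i = 1 \<and> \<bar>e $ i\<bar> = 1"
    using e_mem \<open>e $ i \<noteq> 0\<close> by (rule ternary_nonzero)
  \<comment> \<open>As \<open>e $ i = \<plusminus>1\<close>, the row \<open>r\<close> solves \<open>a \<bullet> e \<approx> 0\<close> for \<open>a $ i\<close>.\<close>
  define r where "r = axis i 1 - (e $ i) *\<^sub>R e"
  have r_nth: "r $ j = (if j = i then 0 else - (e $ i * e $ j))" for j
    using sq by (simp add: r_def axis_def)
  show thesis
  proof
    have "- (e $ i * e $ j) \<in> {-1, 0, 1}" for j
      by (rule ternary_uminus[OF ternary_mult[OF e_mem e_mem]])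
    then show "r \<in> ternary_cube" by (simp add: ternary_cube_def r_nth)
    show "r $ j = 0" if "j \<notin> J" for j
      using that e(3)[of j] by (simp add: r_nth)
    have "a $ i - r \<bullet> a = e $ i * (e \<bullet> a)"
      by (simp add: r_def inner_diff_left inner_axis')
    then show "\<bar>a $ i - r \<bullet> a\<bar> \<le> \<eta>"
      using sq e(4) by (simp add: abs_mult inner_commute[of e])
  qed
qed

lemma maximal_dissociated_approximation:
  fixes a :: "real ^ 'n"
  assumes "0 \<le> \<eta>" and "dissociated a \<eta> J"
    and "\<And>i. i \<notin> J \<Longrightarrow> \<not> dissociated a \<eta> (insert i J)"
  obtains C :: "real ^ 'n ^ 'n"
  where "\<And>i. C $ i \<in> ternary_cube" and "\<And>i j. j \<notin> J \<Longrightarrow> C $ i $ j = 0"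
    and "\<And>i. i \<in> J \<Longrightarrow> C $ i = axis i 1" and "\<And>i. \<bar>a $ i - (C *v a) $ i\<bar> \<le> \<eta>"
proof -
  have "\<exists>r. r \<in> ternary_cube \<and> (\<forall>j. j \<notin> J \<longrightarrow> r $ j = 0) \<and> \<bar>a $ i - r \<bullet> a\<bar> \<le> \<eta>"
    if "i \<notin> J" for i
    by (rule approximating_row_if_not_dissociated[OF assms(2) assms(3)[OF that] that]) blast
  then obtain R where R: "\<And>i. i \<notin> J \<Longrightarrow> R i \<in> ternary_cube"
    "\<And>i j. i \<notin> J \<Longrightarrow> j \<notin> J \<Longrightarrow> R i $ j = 0" "\<And>i. i \<notin> J \<Longrightarrow> \<bar>a $ i - R i \<bullet> a\<bar> \<le> \<eta>"
    by metis
  define C :: "real ^ 'n ^ 'n" where "C = (\<chi> i. if i \<in> J then axis i 1 else R i)"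
  show thesis
  proof
    show "C $ i \<in> ternary_cube" for i
      using R(1)[of i] by (auto simp: C_def ternary_cube_def axis_def)
    show "C $ i $ j = 0" if "j \<notin> J" for i j
      using that R(2)[of i j] by (auto simp: C_def axis_def)
    show "C $ i = axis i 1" if "i \<in> J" for i
      using that by (simp add: C_def)
    show "\<bar>a $ i - (C *v a) $ i\<bar> \<le> \<eta>" for i
      using R(3)[of i] assms(1) by (simp add: C_def matrix_vector_mul_component inner_axis')
  qed
qed

lemma vector_matrix_mult_ternary:
  fixes x :: "real ^ 'n" and C :: "real ^ 'n ^ 'n"
  assumes "x \<in> ternary_cube" and "\<And>i. C $ i \<in> ternary_cube"
  shows "(x v* C) $ j \<in> \<int>" and "\<bar>(x v* C) $ j\<bar> \<le> real CARD('n)"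
proof -
  have entry: "x $ i * C $ i $ j \<in> {-1, 0, 1}" for i
    using assms(1) assms(2)[of i] by (intro ternary_mult) (auto simp: ternary_cube_def)
  have trit: "t \<in> \<int> \<and> \<bar>t\<bar> \<le> 1" if "t \<in> {-1, 0, 1}" for t :: real
    using that by auto
  have "x $ i * C $ i $ j \<in> \<int>" for i using trit[OF entry] by blast
  then show "(x v* C) $ j \<in> \<int>" unfolding vector_matrix_mult_def by (simp add: Ints_sum)
  have "\<bar>(x v* C) $ j\<bar> \<le> (\<Sum>i\<in>UNIV. \<bar>x $ i * C $ i $ j\<bar>)"
    by (simp add: vector_matrix_mult_def)
  also have "\<dots> \<le> (\<Sum>i\<in>(UNIV :: 'n set). 1)"
  proof (rule sum_mono)
    show "\<bar>x $ i * C $ i $ j\<bar> \<le> 1" for i using trit[OF entry] by blast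
  qed
  finally show "\<bar>(x v* C) $ j\<bar> \<le> real CARD('n)" by simp
qed

lemma abs_inner_ternary_le:
  fixes x v :: "real ^ 'n"
  assumes "x \<in> ternary_cube" and "\<And>i. \<bar>v $ i\<bar> \<le> \<eta>"
  shows "\<bar>x \<bullet> v\<bar> \<le> real CARD('n) * \<eta>"
proof -
  have "\<bar>x \<bullet> v\<bar> \<le> (\<Sum>i\<in>UNIV. \<bar>x $ i\<bar> * \<bar>v $ i\<bar>)"
    unfolding inner_vec_def by (rule order_trans[OF sum_abs]) (simp add: abs_mult)
  also have "\<dots> \<le> (\<Sum>i\<in>(UNIV :: 'n set). \<eta>)"
  proof (rule sum_mono)
    fix i
    have "\<bar>x $ i\<bar> \<le> 1" using assms(1) by (rule abs_nth_le_1_if_ternary)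
    then show "\<bar>x $ i\<bar> * \<bar>v $ i\<bar> \<le> \<eta>"
      using mult_mono[of "\<bar>x $ i\<bar>" 1 "\<bar>v $ i\<bar>" \<eta>] assms(2)[of i] by simp
  qed
  finally show ?thesis by simp
qed

lemma abs_matrix_vector_mult_le:
  fixes C :: "real ^ 'n ^ 'n" and w :: "real ^ 'n"
  assumes "\<And>i. C $ i \<in> ternary_cube" and "\<And>j. j \<notin> J \<Longrightarrow> w $ j = 0" and "\<And>j. \<bar>w $ j\<bar> \<le> K"
  shows "\<bar>(C *v w) $ i\<bar> \<le> real (card J) * K"
proof -
  have "(C *v w) $ i = (\<Sum>j\<in>J. C $ i $ j * w $ j)"
    unfolding matrix_vector_mult_def using assms(2)
    by (simp, intro sum.mono_neutral_right) auto
  also have "\<bar>\<dots>\<bar> \<le> (\<Sum>j\<in>J. K)"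
  proof (rule order_trans[OF sum_abs sum_mono])
    fix j
    have "\<bar>C $ i $ j\<bar> \<le> 1" using assms(1) by (rule abs_nth_le_1_if_ternary)
    then show "\<bar>C $ i $ j * w $ j\<bar> \<le> K"
      using mult_mono[of "\<bar>C $ i $ j\<bar>" 1 "\<bar>w $ j\<bar>" K] assms(3)[of j] by (simp add: abs_mult)
  qed
  finally show ?thesis by simp
qed

lemma abs_prod_diagonal_le_if_small_column:
  fixes M :: "real ^ 'n ^ 'n" and J :: "'n set"
  assumes "p permutes J" and "k \<in> J"
    and "\<And>i. i \<notin> J \<Longrightarrow> M $ i = axis i 1"
    and "\<And>i. i \<in> J \<Longrightarrow> \<bar>M $ i $ k\<bar> \<le> \<eta>"
    and "\<And>i j. i \<in> J \<Longrightarrow> j \<noteq> k \<Longrightarrow> \<bar>M $ i $ j\<bar> \<le> B"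
  shows "(\<Prod>i\<in>UNIV. \<bar>M $ i $ p i\<bar>) \<le> B ^ (card J - 1) * \<eta>"
proof -
  have "0 \<le> \<eta>" using assms(4)[OF assms(2)] by linarith
  define i0 where "i0 = inv p k"
  have i0: "i0 \<in> J" "p i0 = k"
    using assms(1,2) by (auto simp: i0_def permutes_in_image permutes_inverses(1) permutes_inv)
  have "(\<Prod>i\<in>UNIV. \<bar>M $ i $ p i\<bar>) = (\<Prod>i\<in>J. \<bar>M $ i $ p i\<bar>)"
    using assms(1,3) by (intro prod.mono_neutral_right) (auto simp: permutes_not_in)
  also have "\<dots> = \<bar>M $ i0 $ k\<bar> * (\<Prod>i\<in>J - {i0}. \<bar>M $ i $ p i\<bar>)"
    using i0 by (simp add: prod.remove)
  also have "\<dots> \<le> \<eta> * (\<Prod>i\<in>J - {i0}. B)"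
  proof (intro mult_mono prod_mono conjI)
    fix i assume "i \<in> J - {i0}"
    then have "p i \<noteq> k" using i0 assms(1) by (metis DiffE permutes_inj inj_eq singletonI)
    then show "\<bar>M $ i $ p i\<bar> \<le> B" using assms(5) \<open>i \<in> J - {i0}\<close> by blast
  qed (use i0 assms(4) \<open>0 \<le> \<eta>\<close> in \<open>auto intro: prod_nonneg\<close>)
  also have "\<dots> = B ^ (card J - 1) * \<eta>"
    using i0 by (simp add: card_Diff_singleton)
  finally show ?thesis .
qed

lemma abs_det_le_if_small_column:
  fixes M :: "real ^ 'n ^ 'n" and J :: "'n set"
  assumes "k \<in> J"
    and "\<And>i. i \<notin> J \<Longrightarrow> M $ i = axis i 1"
    and "\<And>i. i \<in> J \<Longrightarrow> \<bar>M $ i $ k\<bar> \<le> \<eta>"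
    and "\<And>i j. i \<in> J \<Longrightarrow> j \<noteq> k \<Longrightarrow> \<bar>M $ i $ j\<bar> \<le> B"
  shows "\<bar>det M\<bar> \<le> fact (card J) * B ^ (card J - 1) * \<eta>"
proof -
  let ?t = "\<lambda>p. of_int (sign p) * (\<Prod>i\<in>UNIV. M $ i $ p i)"
  \<comment> \<open>Since the rows outside \<open>J\<close> are unit rows, only permutations of \<open>J\<close> contribute.\<close>
  have "?t p = 0" if p: "p permutes UNIV" "\<not> p permutes J" for p
  proof -
    obtain i where "i \<notin> J" "p i \<noteq> i"
      using p unfolding permutes_def by auto
    then have "M $ i $ p i = 0" using assms(2) by (simp add: axis_def)
    then show ?thesis by auto
  qed
  then have "det M = (\<Sum>p | p permutes J. ?t p)"
    unfolding det_def by (intro sum.mono_neutral_right) (auto intro: permutes_subset)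
  also have "\<bar>\<dots>\<bar> \<le> (\<Sum>p | p permutes J. B ^ (card J - 1) * \<eta>)"
  proof (rule order_trans[OF sum_abs sum_mono])
    fix p assume "p \<in> {p. p permutes J}"
    then have "(\<Prod>i\<in>UNIV. \<bar>M $ i $ p i\<bar>) \<le> B ^ (card J - 1) * \<eta>"
      using assms by (intro abs_prod_diagonal_le_if_small_column) auto
    then show "\<bar>?t p\<bar> \<le> B ^ (card J - 1) * \<eta>"
      by (simp add: abs_mult abs_prod sign_def)
  qed
  also have "\<dots> = fact (card J) * B ^ (card J - 1) * \<eta>"
    by (simp add: card_permutations)
  finally show ?thesis .
qed

lemma exists_invertible_rows_extending_axes:
  fixes Y :: "(real ^ 'n) set" and J :: "'n set"
  assumes "span (Y \<union> (\<lambda>i. axis i 1) ` (- J)) = UNIV"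
  obtains A :: "real ^ 'n ^ 'n"
  where "det A \<noteq> 0" and "\<And>i. i \<in> J \<Longrightarrow> A $ i \<in> Y" and "\<And>i. i \<notin> J \<Longrightarrow> A $ i = axis i 1"
proof -
  define Ax where "Ax = (\<lambda>i. axis i (1::real)) ` (- J)"
  have "independent Ax"
    by (rule independent_mono[OF independent_Basis]) (auto simp: Ax_def)
  then obtain B where "Ax \<subseteq> B" "B \<subseteq> Y \<union> Ax" "independent B" "Y \<union> Ax \<subseteq> span B"
    using maximal_independent_subset_extend[of Ax "Y \<union> Ax"] by blast
  have span_B: "span B = UNIV"
    using assms span_mono[OF \<open>Y \<union> Ax \<subseteq> span B\<close>] by (auto simp: Ax_def span_span)
  have "finite B" using \<open>independent B\<close> finite_Basis independent_bound by blast
  have "card B = CARD('n)"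
    using basis_card_eq_dim[of B UNIV] span_B \<open>independent B\<close> by simp
  moreover have "card Ax = CARD('n) - card J"
    unfolding Ax_def by (subst card_image) (auto simp: inj_on_def axis_eq_axis Compl_eq_Diff_UNIV card_Diff_subset)
  ultimately have "card (B - Ax) = card J"
    using \<open>Ax \<subseteq> B\<close> \<open>finite B\<close> card_mono[of UNIV J]
    by (simp add: card_Diff_subset finite_subset)
  then obtain g where g: "bij_betw g J (B - Ax)"
    by (metis \<open>finite B\<close> finite_Diff finite_same_card_bij finite_class.finite_UNIV rev_finite_subset subset_UNIV)
  define A :: "real ^ 'n ^ 'n" where "A = (\<chi> i. if i \<in> J then g i else axis i 1)"
  have rows_A: "rows A = B"
  proof -
    have "rows A = g ` J \<union> Ax"
      by (auto simp: rows_def row_def A_def Ax_def vec_nth_inverse)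
    then show ?thesis using g \<open>Ax \<subseteq> B\<close> by (auto simp: bij_betw_def)
  qed
  show thesis
  proof
    have "rank A = CARD('n)"
      using span_B \<open>card B = CARD('n)\<close> \<open>independent B\<close>
      by (simp add: row_rank_def rows_A dim_eq_card_independent)
    then show "det A \<noteq> 0" by (simp add: det_eq_0_rank)
    show "A $ i \<in> Y" if "i \<in> J" for i
      using that g \<open>B \<subseteq> Y \<union> Ax\<close> by (auto simp: A_def bij_betw_def)
    show "A $ i = axis i 1" if "i \<notin> J" for i
      using that by (simp add: A_def)
  qed
qed

lemma abs_det_ge_1_if_integer:
  fixes A :: "real ^ 'n ^ 'n"
  assumes "det A \<noteq> 0" and "\<And>i j. A $ i $ j \<in> \<int>"
  shows "1 \<le> \<bar>det A\<bar>"
proof -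
  have "det A \<in> \<int>"
    unfolding det_def using assms(2) by (intro Ints_sum Ints_mult Ints_prod) auto
  with assms(1) show ?thesis using Ints_nonzero_abs_ge1 by blast
qed

lemma cramer_nth:
  fixes A :: "'a :: field ^ 'n ^ 'n"
  assumes "det A \<noteq> 0"
  shows "x $ k = det (\<chi> i j. if j = k then (A *v x) $ i else A $ i $ j) / det A"
proof -
  have "x = (\<chi> k. det (\<chi> i j. if j = k then (A *v x) $ i else A $ i $ j) / det A)"
    using cramer[OF assms] by blast
  then have "x $ k = (\<chi> k. det (\<chi> i j. if j = k then (A *v x) $ i else A $ i $ j) / det A) $ k"
    by (rule arg_cong)
  then show ?thesis by (simp only: vec_lambda_beta)
qed

lemma abs_component_le_if_spanning:
  fixes w :: "real ^ 'n" and Y :: "(real ^ 'n) set"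
  assumes "\<And>i. i \<notin> J \<Longrightarrow> w $ i = 0"
    and "\<And>y i. y \<in> Y \<Longrightarrow> y $ i \<in> \<int>" and "\<And>y i. y \<in> Y \<Longrightarrow> \<bar>y $ i\<bar> \<le> B"
    and "\<And>y. y \<in> Y \<Longrightarrow> \<bar>y \<bullet> w\<bar> \<le> \<eta>"
    and "span (Y \<union> (\<lambda>i. axis i 1) ` (- J)) = UNIV"
    and "0 \<le> B" and "0 \<le> \<eta>"
  shows "\<bar>w $ k\<bar> \<le> fact (card J) * B ^ (card J - 1) * \<eta>"
proof (cases "k \<in> J")
  case False
  then show ?thesis using assms(1,6,7) by simp
next
  case True
  obtain A where A: "det A \<noteq> 0" "\<And>i. i \<in> J \<Longrightarrow> A $ i \<in> Y"
    "\<And>i. i \<notin> J \<Longrightarrow> A $ i = axis i 1"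
    using exists_invertible_rows_extending_axes[OF assms(5)] by blast
  have "A $ i $ j \<in> \<int>" for i j
    using A(2,3) assms(2) by (cases "i \<in> J") (auto simp: axis_def)
  with A(1) have det_A: "1 \<le> \<bar>det A\<bar>" by (rule abs_det_ge_1_if_integer)
  define M where "M = (\<chi> i j. if j = k then (A *v w) $ i else A $ i $ j)"
  have "w $ k = det M / det A"
    unfolding M_def by (rule cramer_nth[OF A(1)])
  also have "\<bar>\<dots>\<bar> \<le> \<bar>det M\<bar>"
    using det_A by (simp add: divide_le_eq mult_le_cancel_left1)
  also have "\<dots> \<le> fact (card J) * B ^ (card J - 1) * \<eta>"
  proof (rule abs_det_le_if_small_column[OF True])
    show "M $ i = axis i 1" if "i \<notin> J" for i
    proof -
      have "(A *v w) $ i = 0"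
        using that A(3) assms(1) by (simp add: matrix_vector_mul_component inner_axis')
      then show ?thesis
        using that True A(3)[OF that] by (auto simp: M_def vec_eq_iff axis_def)
    qed
    show "\<bar>M $ i $ k\<bar> \<le> \<eta>" if "i \<in> J" for i
      using assms(4)[OF A(2)[OF that]] by (simp add: M_def matrix_vector_mul_component)
    show "\<bar>M $ i $ j\<bar> \<le> B" if "i \<in> J" "j \<noteq> k" for i j
      using that assms(3)[OF A(2)] by (simp add: M_def)
  qed
  finally show ?thesis .
qed

lemma hyperplane_through_if_not_spanning:
  fixes C :: "real ^ 'n ^ 'n" and T :: "(real ^ 'n) set"
  assumes "\<And>i. i \<in> J \<Longrightarrow> C $ i = axis i 1"
    and "span ((\<lambda>x. x v* C - x0 v* C) ` T \<union> (\<lambda>i. axis i 1) ` (- J)) \<noteq> UNIV"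
  shows "\<exists>H. is_hyperplane H \<and> T \<subseteq> H"
proof -
  let ?V = "(\<lambda>x. x v* C - x0 v* C) ` T \<union> (\<lambda>i. axis i 1) ` (- J)"
  obtain c :: "real ^ 'n" where "c \<noteq> 0" and orth: "\<And>y. y \<in> span ?V \<Longrightarrow> c \<bullet> y = 0"
    using orthogonal_to_subspace_exists_gen[of ?V UNIV] assms(2)
    by (metis orthogonal_def psubsetI span_UNIV subset_UNIV)
  have "c $ i = 0" if "i \<notin> J" for i
    using orth[of "axis i 1"] that by (simp add: span_base inner_axis)
  \<comment> \<open>The normal \<open>C *v c\<close> agrees with \<open>c\<close> on \<open>J\<close>, which contains the support of \<open>c\<close>.\<close>
  moreover obtain j where "c $ j \<noteq> 0" using \<open>c \<noteq> 0\<close> by (auto simp: vec_eq_iff)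
  ultimately have "(C *v c) $ j \<noteq> 0"
    using assms(1) by (metis inner_axis' matrix_vector_mul_component real_inner_1_left)
  then have "C *v c \<noteq> 0" by auto
  moreover have "T \<subseteq> {x. (C *v c) \<bullet> x = (C *v c) \<bullet> x0}"
  proof
    fix x assume "x \<in> T"
    then have "c \<bullet> (x v* C - x0 v* C) = 0" by (intro orth span_base) auto
    then show "x \<in> {x. (C *v c) \<bullet> x = (C *v c) \<bullet> x0}"
      by (simp add: inner_diff_right inner_commute[of c] dot_lmul_matrix inner_commute[of _ "C *v c"])
  qed
  ultimately show ?thesis unfolding is_hyperplane_def by blast
qed

text \<open>
  Cramer's rule bounds each \<open>w $ j\<close> by \<open>m! (2n)^(m-1) 2(n + 1) \<eta>\<close>, where \<open>m = card J\<close>;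
  each \<open>a $ i\<close> is within \<open>\<eta>\<close> of a signed sum of \<open>m\<close> of them.
\<close>

definition coefficient_bound_factor :: "nat \<Rightarrow> nat \<Rightarrow> real" where
  "coefficient_bound_factor n m = real m * fact m * (2 * real n) ^ (m - 1) * (2 * (real n + 1)) + 1"

lemma inner_restrict_vector_matrix_mult_approx:
  fixes a x :: "real ^ 'n" and C :: "real ^ 'n ^ 'n"
  assumes "x \<in> ternary_cube" and "\<And>i j. j \<notin> J \<Longrightarrow> C $ i $ j = 0"
    and "\<And>i. \<bar>a $ i - (C *v a) $ i\<bar> \<le> \<eta>"
  shows "\<bar>(x v* C) \<bullet> (\<chi> j. if j \<in> J then a $ j else 0) - a \<bullet> x\<bar> \<le> real CARD('n) * \<eta>"
proof -
  have "C *v (\<chi> j. if j \<in> J then a $ j else 0) = C *v a"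
    unfolding vec_eq_iff matrix_vector_mult_def by (auto intro!: sum.cong simp: assms(2))
  then have "(x v* C) \<bullet> (\<chi> j. if j \<in> J then a $ j else 0) = x \<bullet> (C *v a)"
    by (simp add: dot_lmul_matrix)
  also have "\<dots> = a \<bullet> x - x \<bullet> (a - C *v a)"
    by (simp add: inner_diff_right inner_commute)
  finally have eq: "(x v* C) \<bullet> (\<chi> j. if j \<in> J then a $ j else 0) - a \<bullet> x = - (x \<bullet> (a - C *v a))"
    by simp
  have "\<bar>x \<bullet> (a - C *v a)\<bar> \<le> real CARD('n) * \<eta>"
    using assms(3) by (intro abs_inner_ternary_le[OF assms(1)]) simp
  then show ?thesis by (simp only: eq abs_minus_cancel)
qed

lemma abs_nth_le_if_spanning:
  fixes a :: "real ^ 'n" and C :: "real ^ 'n ^ 'n" and T :: "(real ^ 'n) set"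
  assumes "T \<subseteq> ternary_cube" and "x0 \<in> T" and "\<And>x. x \<in> T \<Longrightarrow> \<bar>a \<bullet> x - b\<bar> \<le> \<eta>"
    and "0 \<le> \<eta>" and "\<And>i. C $ i \<in> ternary_cube" and "\<And>i j. j \<notin> J \<Longrightarrow> C $ i $ j = 0"
    and "\<And>i. \<bar>a $ i - (C *v a) $ i\<bar> \<le> \<eta>"
    and "span ((\<lambda>x. x v* C - x0 v* C) ` T \<union> (\<lambda>i. axis i 1) ` (- J)) = UNIV"
  shows "\<bar>a $ i\<bar> \<le> coefficient_bound_factor CARD('n) (card J) * \<eta>"
proof -
  define N where "N = real CARD('n)"
  define w where "w = (\<chi> j. if j \<in> J then a $ j else 0)"
  have near: "\<bar>(x v* C) \<bullet> w - b\<bar> \<le> (N + 1) * \<eta>" if "x \<in> T" for x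
  proof -
    have "\<bar>(x v* C) \<bullet> w - a \<bullet> x\<bar> \<le> N * \<eta>"
      unfolding w_def N_def using that assms(1,6,7)
      by (intro inner_restrict_vector_matrix_mult_approx) auto
    moreover have "\<bar>(x v* C) \<bullet> w - b\<bar> \<le> \<bar>(x v* C) \<bullet> w - a \<bullet> x\<bar> + \<bar>a \<bullet> x - b\<bar>"
      using abs_triangle_ineq[of "(x v* C) \<bullet> w - a \<bullet> x" "a \<bullet> x - b"] by simp
    moreover have "(N + 1) * \<eta> = N * \<eta> + \<eta>" by (simp add: distrib_right)
    ultimately show ?thesis using assms(3)[OF that] by linarith
  qed
  define K where "K = fact (card J) * (2 * N) ^ (card J - 1) * (2 * (N + 1) * \<eta>)"
  have "\<bar>w $ k\<bar> \<le> K" for k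
    unfolding K_def
  proof (rule abs_component_le_if_spanning[OF _ _ _ _ assms(8)])
    fix y j assume "y \<in> (\<lambda>x. x v* C - x0 v* C) ` T"
    then obtain x where x: "x \<in> T" "y = x v* C - x0 v* C" by blast
    have "x \<in> ternary_cube" "x0 \<in> ternary_cube" using x(1) assms(1,2) by auto
    note bounds = vector_matrix_mult_ternary[OF this(1) assms(5), of j]
      vector_matrix_mult_ternary[OF this(2) assms(5), of j]
    show "y $ j \<in> \<int>" using bounds by (simp add: x(2))
    have "\<bar>y $ j\<bar> \<le> \<bar>(x v* C) $ j\<bar> + \<bar>(x0 v* C) $ j\<bar>"
      by (simp add: x(2) abs_triangle_ineq4)
    then show "\<bar>y $ j\<bar> \<le> 2 * N" using bounds by (simp add: N_def)
    have "\<bar>y \<bullet> w\<bar> \<le> \<bar>(x v* C) \<bullet> w - b\<bar> + \<bar>(x0 v* C) \<bullet> w - b\<bar>"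
      using abs_triangle_ineq4[of "(x v* C) \<bullet> w - b" "(x0 v* C) \<bullet> w - b"]
      by (simp add: x(2) inner_diff_left)
    then show "\<bar>y \<bullet> w\<bar> \<le> 2 * (N + 1) * \<eta>"
      using near[OF x(1)] near[OF assms(2)] by linarith
  qed (use assms(4) in \<open>auto simp: N_def w_def\<close>)
  moreover have "C *v w = C *v a"
    unfolding vec_eq_iff matrix_vector_mult_def w_def by (auto intro!: sum.cong simp: assms(6))
  ultimately have "\<bar>(C *v a) $ i\<bar> \<le> card J * K"
    using abs_matrix_vector_mult_le[OF assms(5), of J w K i] by (simp add: w_def)
  then have "\<bar>a $ i\<bar> \<le> card J * K + \<eta>"
    using abs_triangle_ineq[of "a $ i - (C *v a) $ i" "(C *v a) $ i"] assms(7)[of i] by simp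
  then show ?thesis by (simp add: K_def N_def coefficient_bound_factor_def algebra_simps)
qed

lemma hyperplane_or_small_coefficients:
  fixes a :: "real ^ 'n" and T :: "(real ^ 'n) set"
  assumes "T \<subseteq> ternary_cube" and "\<And>x. x \<in> T \<Longrightarrow> \<bar>a \<bullet> x - b\<bar> \<le> \<eta>" and "0 \<le> \<eta>"
    and "dissociated a \<eta> J" and "\<And>i. i \<notin> J \<Longrightarrow> \<not> dissociated a \<eta> (insert i J)"
  shows "(\<exists>H. is_hyperplane H \<and> T \<subseteq> H) \<or>
    (\<forall>i. \<bar>a $ i\<bar> \<le> coefficient_bound_factor CARD('n) (card J) * \<eta>)"
proof (cases "T = {}")
  case True
  have "is_hyperplane {x :: real ^ 'n. axis i 1 \<bullet> x = 0}" for i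
    unfolding is_hyperplane_def by (metis axis_eq_0_iff zero_neq_one)
  with True show ?thesis by blast
next
  case False
  then obtain x0 where "x0 \<in> T" by blast
  obtain C where C: "\<And>i. C $ i \<in> ternary_cube" "\<And>i j. j \<notin> J \<Longrightarrow> C $ i $ j = 0"
    "\<And>i. i \<in> J \<Longrightarrow> C $ i = axis i 1" "\<And>i. \<bar>a $ i - (C *v a) $ i\<bar> \<le> \<eta>"
    using maximal_dissociated_approximation[OF assms(3-5)] by blast
  show ?thesis
  proof (cases "span ((\<lambda>x. x v* C - x0 v* C) ` T \<union> (\<lambda>i. axis i 1) ` (- J)) = UNIV")
    case True
    then show ?thesis
      using abs_nth_le_if_spanning[OF assms(1) \<open>x0 \<in> T\<close> assms(2,3) C(1,2,4)] by blast
  next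
    case False
    then show ?thesis using hyperplane_through_if_not_spanning[OF C(3)] by blast
  qed
qed

lemma le_nat_floor_log2:
  fixes N m :: nat
  assumes "1 \<le> N" and "0 < \<alpha>" and "\<alpha> * 2 ^ m \<le> 1"
  shows "m \<le> nat \<lfloor>log 2 (real N / \<alpha>)\<rfloor>"
proof -
  have "2 powr real m \<le> 1 / \<alpha>"
    using assms(2,3) by (simp add: powr_realpow field_simps)
  also have "\<dots> \<le> real N / \<alpha>"
    using assms(1,2) by (simp add: divide_right_mono)
  finally have "real m \<le> log 2 (real N / \<alpha>)"
    using assms(1,2) by (simp add: le_log_iff)
  then show ?thesis by linarith
qed

lemma cramer_term_le:
  fixes N m k :: nat
  assumes "1 \<le> N" and "m \<le> k" and "0 \<le> \<beta>"
  shows "real N * (real m * fact m * (2 * real N) ^ (m - 1) * (2 * (real N + 1)) * \<beta>)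
    \<le> 2 ^ m * \<beta> * (real N ^ (5 + k) * fact (2 + k))"
proof (cases m)
  case 0
  then show ?thesis using assms(3) by simp
next
  case (Suc m')
  have "real m * fact m \<le> fact (m + 1)" by simp
  also have "\<dots> \<le> fact (k + 1)" using assms(2) by (intro fact_mono) auto
  finally have fact_le: "real m * fact m \<le> fact (k + 1)" .
  have "real N ^ m * (real N + 1) \<le> real N ^ m * (2 * real N)"
    using assms(1) by (intro mult_left_mono) auto
  also have "\<dots> \<le> 2 * real N ^ (5 + k)"
    using assms(1,2) power_increasing[of "m + 1" "5 + k" "real N"] by (simp add: mult.commute)
  finally have pow_le: "real N ^ m * (real N + 1) \<le> 2 * real N ^ (5 + k)" .
  have "real N * (real m * fact m * (2 * real N) ^ (m - 1) * (2 * (real N + 1)) * \<beta>)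
      = (real m * fact m) * (2 ^ m * \<beta>) * (real N ^ m * (real N + 1))"
    by (simp add: Suc algebra_simps)
  also have "\<dots> \<le> fact (k + 1) * (2 ^ m * \<beta>) * (2 * real N ^ (5 + k))"
    using fact_le pow_le assms(3) by (intro mult_mono[OF mult_right_mono]) auto
  also have "\<dots> = (2 * fact (k + 1)) * (2 ^ m * \<beta> * real N ^ (5 + k))"
    by (simp only: mult_ac)
  also have "\<dots> \<le> fact (2 + k) * (2 ^ m * \<beta> * real N ^ (5 + k))"
    using assms(3) by (intro mult_right_mono) (auto simp: fact_Suc[of "Suc k"])
  finally show ?thesis by (simp only: mult_ac)
qed

lemma coefficient_bound_factor_small:
  fixes N m :: nat
  assumes "1 \<le> N" and "0 < \<alpha>" and "\<alpha> * 2 ^ m \<le> 1" and "0 \<le> \<beta>"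
    and "\<beta> \<le> inverse ((2 / \<alpha>) * real N ^ (5 + nat \<lfloor>log 2 (real N / \<alpha>)\<rfloor>)
                  * fact (2 + nat \<lfloor>log 2 (real N / \<alpha>)\<rfloor>))"
  shows "real N * (coefficient_bound_factor N m * \<beta>) < 1"
proof -
  define k where "k = nat \<lfloor>log 2 (real N / \<alpha>)\<rfloor>"
  define X :: real where "X = real N ^ (5 + k) * fact (2 + k)"
  have "real N \<le> real N ^ (5 + k)"
    using assms(1) power_increasing[of 1 "5 + k" "real N"] by simp
  moreover have "(2::real) \<le> fact (2 + k)"
    using fact_mono[of 2 "2 + k", where 'a = real] by simp
  ultimately have "real N * 2 \<le> X"
    unfolding X_def by (intro mult_mono) auto
  then have "2 * real N \<le> X" by simp
  then have "0 < X" using assms(1) by simp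
  have "\<beta> * (2 * X) \<le> \<alpha>"
    using assms(5) \<open>0 < X\<close> by (simp add: X_def k_def pos_le_divide_eq mult_ac)
  have "\<alpha> * 1 \<le> \<alpha> * 2 ^ m"
    using assms(2) by (intro mult_left_mono) auto
  then have "\<alpha> \<le> 1" using assms(3) by simp
  have "m \<le> k" unfolding k_def using assms(1-3) by (rule le_nat_floor_log2)
  then have "real N * (real m * fact m * (2 * real N) ^ (m - 1) * (2 * (real N + 1)) * \<beta>)
      \<le> 2 ^ m * \<beta> * X"
    unfolding X_def by (rule cramer_term_le[OF assms(1) _ assms(4)])
  also have "\<dots> = 2 ^ m * (\<beta> * (2 * X)) / 2" by simp
  also have "\<dots> \<le> 2 ^ m * \<alpha> / 2"
    using \<open>\<beta> * (2 * X) \<le> \<alpha>\<close> by (simp add: divide_right_mono)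
  also have "\<dots> \<le> 1 / 2" using assms(3) by (simp add: mult.commute)
  finally have "real N * (real m * fact m * (2 * real N) ^ (m - 1) * (2 * (real N + 1)) * \<beta>)
      \<le> 1 / 2" .
  moreover have "real N * \<beta> * 4 \<le> \<beta> * (2 * X)"
    using mult_right_mono[OF \<open>2 * real N \<le> X\<close> assms(4)] by (simp add: algebra_simps)
  ultimately show ?thesis
    using \<open>\<beta> * (2 * X) \<le> \<alpha>\<close> \<open>\<alpha> \<le> 1\<close> by (simp add: coefficient_bound_factor_def algebra_simps)
qed

lemma exists_abs_nth_gt:
  fixes a :: "real ^ 'n"
  assumes "a \<noteq> 0" and "real CARD('n) * c < 1"
  shows "\<exists>i. c * norm a < \<bar>a $ i\<bar>"
proof (rule ccontr)
  assume "\<nexists>i. c * norm a < \<bar>a $ i\<bar>"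
  then have small: "\<bar>a $ i\<bar> \<le> c * norm a" for i by (simp add: not_less)
  have "norm a \<le> (\<Sum>i\<in>UNIV. \<bar>a $ i\<bar>)" by (rule norm_le_l1_cart)
  also have "\<dots> \<le> (\<Sum>i\<in>(UNIV :: 'n set). c * norm a)" by (intro sum_mono small)
  also have "\<dots> = (real CARD('n) * c) * norm a" by simp
  also have "\<dots> < norm a" using assms by simp
  finally show False by simp
qed

theorem theorem45:
  fixes H S :: "(real ^ 'n) set" and \<alpha> \<beta> :: real
  assumes "is_hyperplane H"
    and "S \<subseteq> cube_pm" and "S \<subseteq> neighborhood H \<beta>"
    and "0 < \<alpha>" and "real (card S) = \<alpha> * 2 ^ CARD('n)"
    and "0 \<le> \<beta>"
    and "\<beta> \<le> inverse ((2 / \<alpha>) * real CARD('n) ^ (5 + nat \<lfloor>log 2 (real CARD('n) / \<alpha>)\<rfloor>)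
                  * fact (2 + nat \<lfloor>log 2 (real CARD('n) / \<alpha>)\<rfloor>))"
  shows "\<exists>H'. is_hyperplane H' \<and> (cube_pm \<union> cube01) \<inter> neighborhood H \<beta> \<subseteq> H'"
proof -
  obtain a b where "a \<noteq> 0" and H: "H = {x. a \<bullet> x = b}"
    using assms(1) unfolding is_hyperplane_def by blast
  have near: "\<bar>a \<bullet> x - b\<bar> \<le> \<beta> * norm a" if "x \<in> neighborhood H \<beta>" for x
    using abs_inner_sub_le_if_in_neighborhood[OF \<open>a \<noteq> 0\<close>] that by (simp add: H)
  obtain J where J: "dissociated a (\<beta> * norm a) J"
    "\<And>i. i \<notin> J \<Longrightarrow> \<not> dissociated a (\<beta> * norm a) (insert i J)"
    using exists_maximal_dissociated by blast
  have "card S * 2 ^ card J \<le> 2 ^ CARD('n)"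
    by (rule card_le_if_dissociated[OF assms(2) _ J(1)]) (use near assms(3) in auto)
  then have "real (card S) * 2 ^ card J \<le> 2 ^ CARD('n)"
    using of_nat_le_iff[of "card S * 2 ^ card J" "2 ^ CARD('n)", where 'a = real] by simp
  then have "(\<alpha> * 2 ^ card J) * 2 ^ CARD('n) \<le> 1 * 2 ^ CARD('n)"
    using assms(5) by (simp add: mult_ac)
  then have "\<alpha> * 2 ^ card J \<le> 1" by (rule mult_right_le_imp_le) simp
  then have "real CARD('n) * (coefficient_bound_factor CARD('n) (card J) * \<beta>) < 1"
    using assms(4,6,7) by (intro coefficient_bound_factor_small) (auto simp: Suc_le_eq)
  then obtain i where "coefficient_bound_factor CARD('n) (card J) * \<beta> * norm a < \<bar>a $ i\<bar>"
    using exists_abs_nth_gt[OF \<open>a \<noteq> 0\<close>] by blast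
  moreover have "(\<exists>H'. is_hyperplane H' \<and> (cube_pm \<union> cube01) \<inter> neighborhood H \<beta> \<subseteq> H') \<or>
      (\<forall>i. \<bar>a $ i\<bar> \<le> coefficient_bound_factor CARD('n) (card J) * (\<beta> * norm a))"
    using cube_pm_Un_cube01_subset_ternary_cube near assms(6) J
    by (intro hyperplane_or_small_coefficients) auto
  ultimately show ?thesis by (metis mult.assoc not_le)
qed

end
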